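(* Let $\mathcal L\in\mathbb{R}^{n_1\times r\times n_3}$, $\mathcal R\in\mathbb{R}^{n_2\times r\times n_3}$ satisfy $\mathcal L^\top*\mathcal L=\mathcal R^\top*\mathcal R$, and let $\mathcal X=\mathcal L*\mathcal R^\top$. Let $\mathcal X_\star=\mathcal U_\star*\mathcal S_\star*\mathcal V_\star^\top$ be a compact t-SVD of $\mathcal X_\star\in\mathbb{R}^{n_1\times n_2\times n_3}$ with tubal rank $r_\star$, and set $\mathcal L_\star=\mathcal U_\star*\mathcal S_\star^{1/2}$, $\mathcal R_\star=\mathcal V_\star*\mathcal S_\star^{1/2}$, $\mathcal F=\begin{bmatrix}\mathcal L\\ \mathcal R\end{bmatrix}$, $\mathcal F_\star=\begin{bmatrix}\mathcal L_\star\\ \mathcal R_\star\end{bmatrix}$. Then $$\|\mathcal F*\mathcal F^\top-\mathcal F_\star*\mathcal F_\star^\top\|_F\le2\|\mathcal X-\mathcal X_\star\|_F.$$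
   Context: For $\mathcal{A}\in\mathbb{R}^{n_1\times n_2\times n_3}$, $\bar{\mathcal A}$ is its discrete Fourier transform along the third mode with frontal slices $\bar A^{(k)}$. The t-product $\mathcal A*\mathcal B$ has Fourier slices $\bar A^{(k)}\bar B^{(k)}$; $\mathcal A^\top$ has Fourier slices $(\bar A^{(k)})^H$; $\mathcal I$ has first frontal slice the identity matrix and the rest zero. $\|\cdot\|_F$ is the entrywise Frobenius norm. Stacking $\begin{bmatrix}\mathcal L\\ \mathcal R\end{bmatrix}\in\mathbb{R}^{(n_1+n_2)\times r\times n_3}$ is along the first mode. A compact t-SVD $\mathcal X_\star=\mathcal U_\star*\mathcal S_\star*\mathcal V_\star^\top$ has $\mathcal U_\star\in\mathbb{R}^{n_1\times r_\star\times n_3}$, $\mathcal V_\star\in\mathbb{R}^{n_2\times r_\star\times n_3}$ with $\mathcal U_\star^\top*\mathcal U_\star=\mathcal V_\star^\top*\mathcal V_\star=\mathcal I$, and $\mathcal S_\star\in\mathbb{R}^{r_\star\times r_\star\times n_3}$ whose Fourier slices are diagonal with nonnegative entries; $\mathcal S_\star^{1/2}$ has Fourier slices the entrywise square roots. Tubal rank $=\max_k\mathrm{rank}(\bar A^{(k)})$. *)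

theory Defs
  imports "HOL-Analysis.Analysis" "Jordan_Normal_Form.DL_Rank"
begin

text \<open>Third-order real tensors of size n1 x n2 x n3 are represented as functions
  nat => nat => nat => real, indices 0-based; only entries inside the index box matter.\<close>
type_synonym tensor = "nat \<Rightarrow> nat \<Rightarrow> nat \<Rightarrow> real"

definition teq :: "nat \<Rightarrow> nat \<Rightarrow> nat \<Rightarrow> tensor \<Rightarrow> tensor \<Rightarrow> bool" where
  "teq n1 n2 n3 A B \<longleftrightarrow> (\<forall>i<n1. \<forall>j<n2. \<forall>k<n3. A i j k = B i j k)"

definition tdft :: "nat \<Rightarrow> tensor \<Rightarrow> nat \<Rightarrow> nat \<Rightarrow> nat \<Rightarrow> complex" where
  "tdft n3 A i j k = (\<Sum>t<n3. complex_of_real (A i j t) * cis (- 2 * pi * real k * real t / real n3))"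

text \<open>t-product of A (n1 x m x n3) and B (m x n2 x n3): circular convolution of frontal
  slices, i.e. the tensor whose Fourier slices are the products of Fourier slices.\<close>
definition tprod :: "nat \<Rightarrow> nat \<Rightarrow> tensor \<Rightarrow> tensor \<Rightarrow> tensor" where
  "tprod n3 m A B = (\<lambda>i j k. \<Sum>l<m. \<Sum>t<n3. A i l t * B l j ((k + n3 - t) mod n3))"

text \<open>Tensor transpose: Fourier slices are conjugate transposes.\<close>
definition ttrans :: "nat \<Rightarrow> tensor \<Rightarrow> tensor" where
  "ttrans n3 A = (\<lambda>i j k. A j i ((n3 - k) mod n3))"

definition tid :: tensor where
  "tid = (\<lambda>i j k. if i = j \<and> k = 0 then 1 else 0)"

definition tfro :: "nat \<Rightarrow> nat \<Rightarrow> nat \<Rightarrow> tensor \<Rightarrow> real" where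
  "tfro n1 n2 n3 A = sqrt (\<Sum>i<n1. \<Sum>j<n2. \<Sum>k<n3. (A i j k)\<^sup>2)"

definition tstack :: "nat \<Rightarrow> tensor \<Rightarrow> tensor \<Rightarrow> tensor" where
  "tstack n1 L R = (\<lambda>i j k. if i < n1 then L i j k else R (i - n1) j k)"

definition fdiag_nonneg :: "nat \<Rightarrow> nat \<Rightarrow> tensor \<Rightarrow> bool" where
  "fdiag_nonneg r n3 S \<longleftrightarrow> (\<forall>k<n3. \<forall>i<r. \<forall>j<r.
      (i \<noteq> j \<longrightarrow> tdft n3 S i j k = 0) \<and>
      (i = j \<longrightarrow> Im (tdft n3 S i i k) = 0 \<and> Re (tdft n3 S i i k) \<ge> 0))"

text \<open>S^(1/2): the (real) tensor whose Fourier slices are the entrywise square roots of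
  those of S (via the inverse DFT; for S as above the inverse DFT is real).\<close>
definition tsqrt :: "nat \<Rightarrow> tensor \<Rightarrow> tensor" where
  "tsqrt n3 S = (\<lambda>i j t. Re ((1 / of_nat n3) *
      (\<Sum>k<n3. complex_of_real (sqrt (Re (tdft n3 S i j k))) * cis (2 * pi * real k * real t / real n3))))"

definition tubal_rank :: "nat \<Rightarrow> nat \<Rightarrow> nat \<Rightarrow> tensor \<Rightarrow> nat" where
  "tubal_rank n1 n2 n3 A =
     Max ((\<lambda>k. vec_space.rank n1 (mat n1 n2 (\<lambda>(i, j). tdft n3 A i j k))) ` {..<n3})"

end

theory Submission
  imports Defs
begin

text \<open>Under the block-circulant embedding the t-product becomes the matrix product, the tensor
  transpose the matrix transpose, and \<open>n\<^sub>3 \<parallel>A\<parallel>\<^sub>F\<^sup>2\<close> the squared Frobenius norm, so the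
  claim is about real matrices. For balanced factors, \<open>L\<^sup>T L = R\<^sup>T R\<close> and \<open>P\<^sup>T P = Q\<^sup>T Q\<close>,
  \<open>\<parallel>L L\<^sup>T - P P\<^sup>T\<parallel>\<^sup>2 + \<parallel>R R\<^sup>T - Q Q\<^sup>T\<parallel>\<^sup>2 \<le> 2 \<parallel>L R\<^sup>T - P Q\<^sup>T\<parallel>\<^sup>2\<close>; the two off-diagonal
  blocks of \<open>F F\<^sup>T - F\<^sub>\<star> F\<^sub>\<star>\<^sup>T\<close> are \<open>L R\<^sup>T - P Q\<^sup>T\<close> and its transpose, which gives the
  factor 2. The factors \<open>L\<^sub>\<star> = U\<^sub>\<star> S\<^sub>\<star>\<^sup>1\<^sup>/\<^sup>2\<close> and \<open>R\<^sub>\<star> = V\<^sub>\<star> S\<^sub>\<star>\<^sup>1\<^sup>/\<^sup>2\<close> are balanced because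
  \<open>U\<^sub>\<star>\<close> and \<open>V\<^sub>\<star>\<close> have orthonormal columns, and \<open>L\<^sub>\<star> R\<^sub>\<star>\<^sup>T = X\<^sub>\<star>\<close> because
  \<open>S\<^sub>\<star>\<^sup>1\<^sup>/\<^sup>2 * (S\<^sub>\<star>\<^sup>1\<^sup>/\<^sup>2)\<^sup>T = S\<^sub>\<star>\<close>, which is checked on the Fourier slices, where
  \<open>S\<^sub>\<star>\<close> is diagonal and nonnegative.\<close>

lemma int_mod_sub:
  assumes "b \<le> n"
  shows "int ((a + n - b) mod n) = (int a - int b) mod int n"
proof -
  have "int (a + n - b) = (int a - int b) + int n"
    using assms by simp
  then show ?thesis
    by (simp add: zmod_int)
qed

lemma mod_neg_involution: "p < n \<Longrightarrow> (n - (n - p) mod n) mod n = (p::nat)"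
  by (cases "p = 0") auto

lemma mod_sub_mod_sub_cancel:
  assumes "s < n" "v < n"
  shows "(s + n - (s + n - v) mod n) mod n = (v::nat)"
proof -
  have "int ((s + n - (s + n - v) mod n) mod n) = int v"
    using assms by (simp add: int_mod_sub mod_le_divisor mod_diff_right_eq)
  then show ?thesis by simp
qed

lemma mod_sub_mod_sub:
  assumes "s < n" "u < n" "v < n"
  shows "((s + n - u) mod n + n - (s + n - v) mod n) mod n = (v + n - u) mod (n::nat)"
proof -
  have "int (((s + n - u) mod n + n - (s + n - v) mod n) mod n) = int ((v + n - u) mod n)"
    using assms by (simp add: int_mod_sub mod_le_divisor mod_diff_eq)
  then show ?thesis by simp
qed

lemma mod_neg_mod_sub:
  assumes "s < n" "u < n"
  shows "(n - (s + n - u) mod n) mod n = (u + n - s) mod (n::nat)"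
proof -
  have "int ((0 + n - (s + n - u) mod n) mod n) = int ((u + n - s) mod n)"
    using assms by (simp only: int_mod_sub mod_le_divisor less_imp_le) (simp add: mod_minus_eq)
  then show ?thesis by simp
qed

lemma sum_mod_neg: "(\<Sum>p<(n::nat). h ((n - p) mod n)) = (\<Sum>p<n. h p)"
  by (rule sum.reindex_bij_witness[where i="\<lambda>p. (n - p) mod n" and j="\<lambda>p. (n - p) mod n"])
     (auto simp: mod_neg_involution)

lemma sum_mod_sub: "s < n \<Longrightarrow> (\<Sum>v<n. f ((s + n - v) mod n)) = (\<Sum>t<(n::nat). f t)"
  by (rule sum.reindex_bij_witness[where i="\<lambda>v. (s + n - v) mod n" and j="\<lambda>v. (s + n - v) mod n"])
     (auto simp: mod_sub_mod_sub_cancel)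

section \<open>Roots of unity and the discrete Fourier transform\<close>

definition unit_root :: "nat \<Rightarrow> int \<Rightarrow> complex" where
  "unit_root n m = cis (2 * pi * of_int m / of_nat n)"

lemma unit_root_add: "unit_root n (a + b) = unit_root n a * unit_root n b"
  by (simp add: unit_root_def cis_mult add_divide_distrib distrib_left)

lemma unit_root_power: "unit_root n (int p * m) = unit_root n m ^ p"
  unfolding unit_root_def Complex.DeMoivre by (simp add: mult_ac)

lemma cnj_unit_root: "cnj (unit_root n m) = unit_root n (- m)"
  by (simp add: unit_root_def cis_cnj)

lemma unit_root_multiple:
  assumes "n > 0"
  shows "unit_root n (int n * q) = 1"
proof -
  have "2 * pi * of_int (int n * q) / real n = 2 * pi * real_of_int q" using assms by simp
  then show ?thesis by (simp only: unit_root_def cis_multiple_2pi Ints_of_int)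
qed

lemma unit_root_periodic: "n > 0 \<Longrightarrow> unit_root n (m + int n * q) = unit_root n m"
  by (simp add: unit_root_add unit_root_multiple)

lemma unit_root_mod:
  assumes "n > 0"
  shows "unit_root n (int (a mod n) * c) = unit_root n (int a * c)"
proof -
  have "int a = int (a mod n) + int n * int (a div n)"
    by (metis div_mult_mod_eq of_nat_add of_nat_mult add.commute mult.commute)
  then have "int a * c = int (a mod n) * c + int n * (int (a div n) * c)"
    by (simp add: algebra_simps)
  then show ?thesis using unit_root_periodic[OF assms] by simp
qed

lemma unit_root_mod_neg:
  assumes "n > 0" "k \<le> n"
  shows "unit_root n (int ((n - k) mod n) * c) = unit_root n (- (int k * c))"
proof -
  have "unit_root n (int ((n - k) mod n) * c) = unit_root n (int (n - k) * c)"
    by (rule unit_root_mod[OF assms(1)])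
  also have "int (n - k) * c = - (int k * c) + int n * c"
    using assms(2) by (simp add: of_nat_diff algebra_simps)
  also have "unit_root n \<dots> = unit_root n (- (int k * c))"
    by (rule unit_root_periodic[OF assms(1)])
  finally show ?thesis .
qed

lemma sum_unit_root:
  assumes n: "n > 0"
  shows "(\<Sum>p<n. unit_root n (int p * m)) = (if int n dvd m then of_nat n else 0)"
proof -
  have "unit_root n m = 1 \<longleftrightarrow> int n dvd m"
  proof
    assume "unit_root n m = 1"
    then have "cos (2 * pi * of_int m / real n) = 1" by (simp add: unit_root_def complex_eq_iff)
    then obtain k :: int where "2 * pi * of_int m / real n = of_int k * 2 * pi"
      by (auto simp: cos_one_2pi_int)
    then have "real_of_int m = of_int (k * int n)" using n by (simp add: field_simps)
    then show "int n dvd m" by (simp only: of_int_eq_iff) simp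
  qed (auto simp: unit_root_multiple[OF n])
  moreover have "unit_root n m ^ n = 1"
    using unit_root_multiple[OF n, of m] by (simp add: unit_root_power[symmetric])
  ultimately show ?thesis
    by (auto simp: unit_root_power geometric_sum)
qed

lemma sum_unit_root_diff:
  assumes "a < n" "b < n"
  shows "(\<Sum>k<n. unit_root n (int k * (int a - int b))) = (if a = b then of_nat n else 0)"
proof -
  have "int n dvd int a - int b \<longleftrightarrow> a = b"
    using assms by (auto simp: mod_eq_dvd_iff[symmetric] simp del: of_nat_diff)
  then show ?thesis using assms by (simp add: sum_unit_root)
qed

definition dft :: "nat \<Rightarrow> (nat \<Rightarrow> complex) \<Rightarrow> nat \<Rightarrow> complex" where
  "dft n f k = (\<Sum>t<n. f t * unit_root n (- (int k * int t)))"

definition idft :: "nat \<Rightarrow> (nat \<Rightarrow> complex) \<Rightarrow> nat \<Rightarrow> complex" where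
  "idft n c t = (\<Sum>k<n. c k * unit_root n (int k * int t)) / of_nat n"

lemma idft_dft:
  assumes "t < n"
  shows "idft n (dft n f) t = f t"
proof -
  have "(\<Sum>k<n. dft n f k * unit_root n (int k * int t))
      = (\<Sum>k<n. \<Sum>s<n. f s * unit_root n (int k * (int t - int s)))"
  proof -
    have "unit_root n (- (int k * int s)) * unit_root n (int k * int t) = unit_root n (int k * (int t - int s))"
      for k s by (simp add: unit_root_add[symmetric] algebra_simps)
    then show ?thesis by (simp add: dft_def sum_distrib_right mult.assoc)
  qed
  also have "\<dots> = (\<Sum>s<n. f s * (\<Sum>k<n. unit_root n (int k * (int t - int s))))"
    by (subst sum.swap) (simp add: sum_distrib_left)
  also have "\<dots> = of_nat n * f t"
    using assms by (simp add: sum_unit_root_diff if_distrib sum.delta cong: if_cong)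
  finally show ?thesis
    using assms by (simp add: idft_def)
qed

lemma dft_idft:
  assumes "k < n"
  shows "dft n (idft n c) k = c k"
proof -
  have "(\<Sum>t<n. (\<Sum>j<n. c j * unit_root n (int j * int t)) * unit_root n (- (int k * int t)))
      = (\<Sum>t<n. \<Sum>j<n. c j * unit_root n (int t * (int j - int k)))"
  proof -
    have "unit_root n (int j * int t) * unit_root n (- (int k * int t)) = unit_root n (int t * (int j - int k))"
      for j t by (simp add: unit_root_add[symmetric] algebra_simps)
    then show ?thesis by (simp add: sum_distrib_right mult.assoc)
  qed
  also have "\<dots> = (\<Sum>j<n. c j * (\<Sum>t<n. unit_root n (int t * (int j - int k))))"
    by (subst sum.swap) (simp add: sum_distrib_left)
  also have "\<dots> = of_nat n * c k"
    using assms by (simp add: sum_unit_root_diff if_distrib sum.delta cong: if_cong)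
  finally show ?thesis
    using assms by (simp add: dft_def idft_def sum_divide_distrib[symmetric])
qed

lemma dft_circular_shift:
  assumes "n > 0" "s < n"
  shows "dft n (\<lambda>t. f ((t + n - s) mod n)) k = unit_root n (- (int k * int s)) * dft n f k"
proof -
  have shift_back: "((u + s) mod n + n - s) mod n = u" if "u < n" for u
  proof -
    have "((u + s) mod n + n - s) mod n = ((u + s) mod n + (n - s)) mod n"
      using assms by simp
    also have "\<dots> = (u + s + (n - s)) mod n"
      by (rule mod_add_left_eq)
    finally show ?thesis
      using assms that by simp
  qed
  have "dft n (\<lambda>t. f ((t + n - s) mod n)) k
      = (\<Sum>u<n. f u * unit_root n (- (int k * int ((u + s) mod n))))"
    unfolding dft_def
    by (rule sum.reindex_bij_witness[where i="\<lambda>u. (u + s) mod n" and j="\<lambda>t. (t + n - s) mod n"])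
       (use assms shift_back in \<open>auto simp: mod_add_left_eq\<close>)
  also have "\<dots> = (\<Sum>u<n. f u * (unit_root n (- (int k * int s)) * unit_root n (- (int k * int u))))"
    using unit_root_mod[OF assms(1), of "u + s" "- int k" for u]
    by (simp add: unit_root_add[symmetric] algebra_simps)
  finally show ?thesis
    by (simp add: dft_def sum_distrib_left mult_ac)
qed

lemma dft_of_real_mod_neg:
  assumes "n > 0" "k \<le> n"
  shows "dft n (\<lambda>t. of_real (f t)) ((n - k) mod n) = cnj (dft n (\<lambda>t. of_real (f t)) k)"
  using unit_root_mod_neg[OF assms, of "- int t" for t]
  by (simp add: dft_def cnj_unit_root)

lemma idft_Reals:
  assumes "n > 0" and sym: "\<And>k. k < n \<Longrightarrow> c ((n - k) mod n) = cnj (c k)"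
  shows "idft n c t \<in> \<real>"
proof -
  have "cnj (idft n c t)
      = (\<Sum>k<n. c ((n - k) mod n) * unit_root n (int ((n - k) mod n) * int t)) / of_nat n"
    using unit_root_mod_neg[OF assms(1), of _ "int t"]
    by (simp add: idft_def sym cnj_unit_root)
  also have "\<dots> = idft n c t"
    unfolding idft_def by (subst sum_mod_neg) (rule refl)
  finally show ?thesis
    by (simp add: Reals_cnj_iff)
qed

section \<open>Fourier slices of tensors\<close>

lemma tdft_eq_dft: "tdft n A i j = dft n (\<lambda>t. of_real (A i j t))"
  by (simp add: fun_eq_iff tdft_def dft_def unit_root_def mult.assoc)

lemma tensor_eqI_tdft:
  assumes "\<And>k. k < n \<Longrightarrow> tdft n A i j k = tdft n B i j k" and "t < n"
  shows "A i j t = B i j t"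
proof -
  have "idft n (tdft n A i j) t = idft n (tdft n B i j) t"
    using assms(1) by (simp add: idft_def)
  then show ?thesis
    using assms(2) by (simp add: tdft_eq_dft idft_dft)
qed

lemma tdft_tprod:
  assumes "n > 0"
  shows "tdft n (tprod n m A B) i j k = (\<Sum>l<m. tdft n A i l k * tdft n B l j k)"
proof -
  have "tdft n (tprod n m A B) i j k
      = (\<Sum>l<m. \<Sum>s<n. of_real (A i l s) * dft n (\<lambda>t. of_real (B l j ((t + n - s) mod n))) k)"
  proof -
    define g where
      "g l s t = of_real (A i l s) * (of_real (B l j ((t + n - s) mod n)) * unit_root n (- (int k * int t)))"
      for l s t
    have "tdft n (tprod n m A B) i j k = (\<Sum>t<n. \<Sum>l<m. \<Sum>s<n. g l s t)"
      by (simp add: g_def tdft_eq_dft dft_def tprod_def sum_distrib_right mult.assoc)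
    also have "\<dots> = (\<Sum>l<m. \<Sum>t<n. \<Sum>s<n. g l s t)"
      by (rule sum.swap)
    also have "\<dots> = (\<Sum>l<m. \<Sum>s<n. \<Sum>t<n. g l s t)"
      by (rule sum.cong[OF refl]) (rule sum.swap)
    finally show ?thesis
      by (simp add: g_def dft_def sum_distrib_left)
  qed
  also have "\<dots> = (\<Sum>l<m. \<Sum>s<n. of_real (A i l s) * unit_root n (- (int k * int s)) * tdft n B l j k)"
  proof -
    have "dft n (\<lambda>t. of_real (B l j ((t + n - s) mod n))) k
        = unit_root n (- (int k * int s)) * tdft n B l j k" if "s < n" for l s
      using dft_circular_shift[OF assms that, of "\<lambda>t. of_real (B l j t)"] by (simp add: tdft_eq_dft)
    then show ?thesis by (simp add: mult.assoc)
  qed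
  finally show ?thesis
    by (simp add: tdft_eq_dft dft_def sum_distrib_right)
qed

lemma tdft_ttrans:
  assumes "n > 0"
  shows "tdft n (ttrans n A) i j k = cnj (tdft n A j i k)"
proof -
  have "tdft n (ttrans n A) i j k
      = (\<Sum>t<n. of_real (A j i t) * unit_root n (- (int k * int ((n - t) mod n))))"
    unfolding tdft_eq_dft dft_def ttrans_def
    by (rule sum.reindex_bij_witness[where i="\<lambda>p. (n - p) mod n" and j="\<lambda>p. (n - p) mod n"])
       (auto simp: mod_neg_involution)
  also have "\<dots> = (\<Sum>t<n. of_real (A j i t) * unit_root n (int k * int t))"
  proof -
    have "unit_root n (- (int k * int ((n - t) mod n))) = unit_root n (int k * int t)" if "t < n" for t
      using unit_root_mod_neg[OF assms, of t "- int k"] that by (simp add: mult.commute)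
    then show ?thesis by simp
  qed
  finally show ?thesis
    by (simp add: tdft_eq_dft dft_def cnj_unit_root)
qed

text \<open>The square-root vector of a real tube is conjugate-symmetric, so its inverse DFT is real
  and taking the real part in \<^const>\<open>tsqrt\<close> loses nothing.\<close>

lemma tdft_tsqrt:
  assumes "n > 0" "k < n"
  shows "tdft n (tsqrt n S) i j k = of_real (sqrt (Re (tdft n S i j k)))"
proof -
  define c where "c k = complex_of_real (sqrt (Re (tdft n S i j k)))" for k
  have "c ((n - k) mod n) = cnj (c k)" if "k < n" for k
    using dft_of_real_mod_neg[OF assms(1), of k "S i j"] that by (simp add: c_def tdft_eq_dft)
  then have "idft n c t \<in> \<real>" for t
    by (rule idft_Reals[OF assms(1)])
  moreover have "tsqrt n S i j t = Re (idft n c t)" for t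
    by (simp add: tsqrt_def idft_def c_def unit_root_def divide_inverse mult_ac)
  ultimately have "(\<lambda>t. of_real (tsqrt n S i j t)) = idft n c"
    by (simp add: fun_eq_iff of_real_Re)
  then show ?thesis
    using dft_idft[OF assms(2)] by (simp add: tdft_eq_dft c_def)
qed

lemma tprod_tsqrt_ttrans:
  assumes "n > 0" and S: "fdiag_nonneg r n S" and "i < r" "j < r" "t < n"
  shows "tprod n r (tsqrt n S) (ttrans n (tsqrt n S)) i j t = S i j t"
proof (rule tensor_eqI_tdft[OF _ \<open>t < n\<close>])
  fix k assume "k < n"
  have off_diag: "tdft n S a l k = 0" if "a < r" "l < r" "l \<noteq> a" for a l
    using S that \<open>k < n\<close> by (simp add: fdiag_nonneg_def)
  have "tdft n (tprod n r (tsqrt n S) (ttrans n (tsqrt n S))) i j k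
      = (\<Sum>l<r. of_real (sqrt (Re (tdft n S i l k)) * sqrt (Re (tdft n S j l k))))"
    using assms(1) \<open>k < n\<close> by (simp add: tdft_tprod tdft_ttrans tdft_tsqrt)
  also have "\<dots> = (\<Sum>l<r. if l = i then of_real (sqrt (Re (tdft n S i i k)) * sqrt (Re (tdft n S j i k))) else 0)"
    using assms(3,4) by (intro sum.cong refl) (auto simp: off_diag)
  also have "\<dots> = tdft n S i j k"
    using S assms(3,4) \<open>k < n\<close>
    by (cases "i = j") (auto simp: off_diag fdiag_nonneg_def complex_eq_iff)
  finally show "tdft n (tprod n r (tsqrt n S) (ttrans n (tsqrt n S))) i j k = tdft n S i j k" .
qed

lemma tprod_assoc:
  assumes "n > 0" "k < n"
  shows "tprod n p (tprod n m A B) C i j k = tprod n m A (tprod n p B C) i j k"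
proof (rule tensor_eqI_tdft[OF _ assms(2)])
  fix k
  have "(\<Sum>l'<p. (\<Sum>l<m. tdft n A i l k * tdft n B l l' k) * tdft n C l' j k)
      = (\<Sum>l<m. tdft n A i l k * (\<Sum>l'<p. tdft n B l l' k * tdft n C l' j k))"
    by (simp add: sum_distrib_left sum_distrib_right mult.assoc) (rule sum.swap)
  then show "tdft n (tprod n p (tprod n m A B) C) i j k = tdft n (tprod n m A (tprod n p B C)) i j k"
    by (simp add: tdft_tprod[OF assms(1)])
qed

lemma ttrans_tprod:
  assumes "n > 0" "k < n"
  shows "ttrans n (tprod n m A B) i j k = tprod n m (ttrans n B) (ttrans n A) i j k"
  by (rule tensor_eqI_tdft[OF _ assms(2)]) (simp add: tdft_tprod tdft_ttrans assms(1) mult.commute)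

lemma tprod_cong:
  assumes "n > 0"
    and "\<And>l t. l < m \<Longrightarrow> t < n \<Longrightarrow> A i l t = A' i l t"
    and "\<And>l t. l < m \<Longrightarrow> t < n \<Longrightarrow> B l j t = B' l j t"
  shows "tprod n m A B i j k = tprod n m A' B' i j k"
  using assms by (simp add: tprod_def)

lemma tprod_outer_middle:
  assumes "n > 0" "k < n"
  shows "tprod n q (tprod n p U T) (ttrans n (tprod n p V T)) i j k
       = tprod n p (tprod n p U (tprod n q T (ttrans n T))) (ttrans n V) i j k"
proof -
  have "tprod n q (tprod n p U T) (ttrans n (tprod n p V T)) i j k
      = tprod n q (tprod n p U T) (tprod n p (ttrans n T) (ttrans n V)) i j k"
    using assms(1) by (intro tprod_cong) (simp_all add: ttrans_tprod)
  also have "\<dots> = tprod n p U (tprod n q T (tprod n p (ttrans n T) (ttrans n V))) i j k"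
    using assms by (rule tprod_assoc)
  also have "\<dots> = tprod n p U (tprod n p (tprod n q T (ttrans n T)) (ttrans n V)) i j k"
    using assms(1) by (intro tprod_cong) (simp_all add: tprod_assoc)
  also have "\<dots> = tprod n p (tprod n p U (tprod n q T (ttrans n T))) (ttrans n V) i j k"
    using assms by (rule tprod_assoc[symmetric])
  finally show ?thesis .
qed

lemma tprod_gram_middle:
  assumes "n > 0" "k < n"
  shows "tprod n a (ttrans n (tprod n p U T)) (tprod n p U T) i j k
       = tprod n p (tprod n p (ttrans n T) (tprod n a (ttrans n U) U)) T i j k"
proof -
  have "tprod n a (ttrans n (tprod n p U T)) (tprod n p U T) i j k
      = tprod n a (tprod n p (ttrans n T) (ttrans n U)) (tprod n p U T) i j k"
    using assms(1) by (intro tprod_cong) (simp_all add: ttrans_tprod)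
  also have "\<dots> = tprod n p (ttrans n T) (tprod n a (ttrans n U) (tprod n p U T)) i j k"
    using assms by (rule tprod_assoc)
  also have "\<dots> = tprod n p (ttrans n T) (tprod n p (tprod n a (ttrans n U) U) T) i j k"
    using assms(1) by (intro tprod_cong) (simp_all add: tprod_assoc)
  also have "\<dots> = tprod n p (tprod n p (ttrans n T) (tprod n a (ttrans n U) U)) T i j k"
    using assms by (rule tprod_assoc[symmetric])
  finally show ?thesis .
qed

lemma tprod_tsqrt_factors:
  assumes "n > 0" "fdiag_nonneg m n S" "k < n"
  shows "tprod n m (tprod n m U (tsqrt n S)) (ttrans n (tprod n m V (tsqrt n S))) i j k
       = tprod n m (tprod n m U S) (ttrans n V) i j k"
proof -
  have "tprod n m (tprod n m U (tsqrt n S)) (ttrans n (tprod n m V (tsqrt n S))) i j k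
      = tprod n m (tprod n m U (tprod n m (tsqrt n S) (ttrans n (tsqrt n S)))) (ttrans n V) i j k"
    using assms(1,3) by (rule tprod_outer_middle)
  also have "\<dots> = tprod n m (tprod n m U S) (ttrans n V) i j k"
    using assms(1) by (intro tprod_cong) (simp_all add: tprod_tsqrt_ttrans[OF assms(1,2)])
  finally show ?thesis .
qed

lemma teq_gram_tprod_right:
  assumes "n > 0" "teq m m n (tprod n a (ttrans n U) U) (tprod n b (ttrans n V) V)"
  shows "teq p p n (tprod n a (ttrans n (tprod n m U T)) (tprod n m U T))
                   (tprod n b (ttrans n (tprod n m V T)) (tprod n m V T))"
  unfolding teq_def
proof (intro allI impI)
  fix i j k assume "i < p" "j < p" "k < n"
  have "tprod n m (tprod n m (ttrans n T) (tprod n a (ttrans n U) U)) T i j k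
      = tprod n m (tprod n m (ttrans n T) (tprod n b (ttrans n V) V)) T i j k"
    using assms by (intro tprod_cong) (auto simp: teq_def)
  then show "tprod n a (ttrans n (tprod n m U T)) (tprod n m U T) i j k
      = tprod n b (ttrans n (tprod n m V T)) (tprod n m V T) i j k"
    using assms(1) \<open>k < n\<close> by (simp add: tprod_gram_middle)
qed

section \<open>Balanced factorizations\<close>

text \<open>Real matrices are functions of a row and a column index, with the index sets passed
  explicitly: \<^term>\<open>mult_tr K A B\<close> is \<open>A B\<^sup>T\<close>, \<^term>\<open>tr_mult I A B\<close> is \<open>A\<^sup>T B\<close>, and
  \<^term>\<open>frob_inner I J M N\<close> is the Frobenius inner product.\<close>

definition mult_tr :: "'k set \<Rightarrow> ('a \<Rightarrow> 'k \<Rightarrow> real) \<Rightarrow> ('b \<Rightarrow> 'k \<Rightarrow> real) \<Rightarrow> 'a \<Rightarrow> 'b \<Rightarrow> real" where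
  "mult_tr K A B a b = (\<Sum>k\<in>K. A a k * B b k)"

definition tr_mult :: "'a set \<Rightarrow> ('a \<Rightarrow> 'k \<Rightarrow> real) \<Rightarrow> ('a \<Rightarrow> 'l \<Rightarrow> real) \<Rightarrow> 'k \<Rightarrow> 'l \<Rightarrow> real" where
  "tr_mult I A B k l = (\<Sum>a\<in>I. A a k * B a l)"

definition frob_inner :: "'a set \<Rightarrow> 'b set \<Rightarrow> ('a \<Rightarrow> 'b \<Rightarrow> real) \<Rightarrow> ('a \<Rightarrow> 'b \<Rightarrow> real) \<Rightarrow> real" where
  "frob_inner I J M N = (\<Sum>a\<in>I. \<Sum>b\<in>J. M a b * N a b)"

definition frob_norm2 :: "'a set \<Rightarrow> 'b set \<Rightarrow> ('a \<Rightarrow> 'b \<Rightarrow> real) \<Rightarrow> real" where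
  "frob_norm2 I J M = frob_inner I J M M"

lemma frob_norm2_nonneg: "0 \<le> frob_norm2 I J M"
  by (simp add: frob_norm2_def frob_inner_def sum_nonneg)

lemma frob_norm2_diff:
  "frob_norm2 I J (\<lambda>a b. M a b - N a b)
     = frob_inner I J M M - 2 * frob_inner I J M N + frob_inner I J N N"
  by (simp add: frob_norm2_def frob_inner_def algebra_simps sum_subtractf sum.distrib sum_distrib_left)

lemma frob_inner_mult_tr:
  "frob_inner I J (mult_tr K A B) (mult_tr K' C D) = frob_inner K K' (tr_mult I A C) (tr_mult J B D)"
  by (simp add: frob_inner_def mult_tr_def tr_mult_def sum_product mult_ac
      sum.swap[of _ J K] sum.swap[of _ J K'] sum.swap[of _ I K] sum.swap[of _ I K'])

text \<open>Expand the three squared norms and move every cross term to the Gram side with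
  \<open>frob_inner_mult_tr\<close>; by the balance hypotheses all terms cancel except
  \<open>2 \<parallel>L\<^sup>T P - R\<^sup>T Q\<parallel>\<^sup>2 \<ge> 0\<close>.\<close>

lemma balanced_factors_dist_le:
  assumes bal: "\<And>k k'. k \<in> K \<Longrightarrow> k' \<in> K \<Longrightarrow> tr_mult IA L L k k' = tr_mult IB R R k k'"
    and bal': "\<And>k k'. k \<in> K' \<Longrightarrow> k' \<in> K' \<Longrightarrow> tr_mult IA P P k k' = tr_mult IB Q Q k k'"
  shows "frob_norm2 IA IA (\<lambda>a a'. mult_tr K L L a a' - mult_tr K' P P a a')
       + frob_norm2 IB IB (\<lambda>b b'. mult_tr K R R b b' - mult_tr K' Q Q b b')
       \<le> 2 * frob_norm2 IA IB (\<lambda>a b. mult_tr K L R a b - mult_tr K' P Q a b)"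
proof -
  define G where "G = tr_mult IA L L"
  define H where "H = tr_mult IA P P"
  define X where "X = tr_mult IA L P"
  define Y where "Y = tr_mult IB R Q"
  have R_gram: "frob_inner K K (tr_mult IB R R) N = frob_inner K K G N"
    and R_gram': "frob_inner K K N (tr_mult IB R R) = frob_inner K K N G" for N
    using bal by (simp_all add: frob_inner_def G_def)
  have Q_gram: "frob_inner K' K' (tr_mult IB Q Q) N = frob_inner K' K' H N"
    and Q_gram': "frob_inner K' K' N (tr_mult IB Q Q) = frob_inner K' K' N H" for N
    using bal' by (simp_all add: frob_inner_def H_def)
  have X_Y: "frob_inner K K' Y X = frob_inner K K' X Y"
    by (simp add: frob_inner_def mult.commute)
  have "0 \<le> frob_norm2 K K' (\<lambda>k k'. X k k' - Y k k')"
    by (rule frob_norm2_nonneg)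
  then show ?thesis
    unfolding frob_norm2_diff frob_inner_mult_tr
    by (simp add: R_gram R_gram' Q_gram Q_gram' X_Y flip: G_def H_def X_def Y_def)
qed

section \<open>Block-circulant matrices\<close>

definition bcirc :: "nat \<Rightarrow> tensor \<Rightarrow> nat \<times> nat \<Rightarrow> nat \<times> nat \<Rightarrow> real" where
  "bcirc n A x y = A (fst x) (fst y) ((snd x + n - snd y) mod n)"

lemma bcirc_tprod:
  assumes "snd x < n" "snd y < n"
  shows "bcirc n (tprod n m A B) x y = (\<Sum>z\<in>{..<m} \<times> {..<n}. bcirc n A x z * bcirc n B z y)"
proof -
  obtain i s j u where xy: "x = (i, s)" "y = (j, u)" by (cases x, cases y)
  with assms have "s < n" "u < n" by auto
  have "(\<Sum>v<n. A i l ((s + n - v) mod n) * B l j ((v + n - u) mod n))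
      = (\<Sum>t<n. A i l t * B l j (((s + n - u) mod n + n - t) mod n))" for l
    using sum_mod_sub[OF \<open>s < n\<close>, of "\<lambda>t. A i l t * B l j (((s + n - u) mod n + n - t) mod n)"]
      \<open>s < n\<close> \<open>u < n\<close> by (simp add: mod_sub_mod_sub)
  then show ?thesis
    by (simp add: xy bcirc_def tprod_def sum.cartesian_product')
qed

lemma bcirc_ttrans: "snd x < n \<Longrightarrow> snd y < n \<Longrightarrow> bcirc n (ttrans n A) x y = bcirc n A y x"
  by (simp add: bcirc_def ttrans_def mod_neg_mod_sub)

lemma mult_tr_bcirc:
  assumes "snd x < n" "snd y < n"
  shows "mult_tr ({..<m} \<times> {..<n}) (bcirc n A) (bcirc n B) x y = bcirc n (tprod n m A (ttrans n B)) x y"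
  using assms by (auto simp: mult_tr_def bcirc_tprod bcirc_ttrans intro!: sum.cong)

lemma tr_mult_bcirc:
  assumes "snd z < n" "snd z' < n"
  shows "tr_mult ({..<m} \<times> {..<n}) (bcirc n A) (bcirc n B) z z' = bcirc n (tprod n m (ttrans n A) B) z z'"
  using assms by (auto simp: tr_mult_def bcirc_tprod bcirc_ttrans intro!: sum.cong)

lemma tr_mult_bcirc_teq:
  assumes "n > 0" "teq r r n (tprod n a (ttrans n A) A) (tprod n b (ttrans n B) B)"
    and "k \<in> {..<r} \<times> {..<n}" "k' \<in> {..<r} \<times> {..<n}"
  shows "tr_mult ({..<a} \<times> {..<n}) (bcirc n A) (bcirc n A) k k'
       = tr_mult ({..<b} \<times> {..<n}) (bcirc n B) (bcirc n B) k k'"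
  using assms by (auto simp: tr_mult_bcirc teq_def bcirc_def)

lemma frob_norm2_bcirc:
  assumes "n > 0"
  shows "frob_norm2 ({..<a} \<times> {..<n}) ({..<b} \<times> {..<n}) (bcirc n A) = real n * (tfro a b n A)\<^sup>2"
proof -
  have "frob_norm2 ({..<a} \<times> {..<n}) ({..<b} \<times> {..<n}) (bcirc n A)
      = (\<Sum>i<a. \<Sum>s<n. \<Sum>j<b. \<Sum>u<n. (A i j ((s + n - u) mod n))\<^sup>2)"
    by (simp add: frob_norm2_def frob_inner_def bcirc_def sum.cartesian_product' power2_eq_square)
  also have "\<dots> = (\<Sum>i<a. \<Sum>s<n. \<Sum>j<b. \<Sum>k<n. (A i j k)\<^sup>2)"
  proof -
    have "(\<Sum>u<n. (A i j ((s + n - u) mod n))\<^sup>2) = (\<Sum>k<n. (A i j k)\<^sup>2)" if "s < n" for i j s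
      using sum_mod_sub[OF that, of "\<lambda>k. (A i j k)\<^sup>2"] by simp
    then show ?thesis by simp
  qed
  also have "\<dots> = real n * (\<Sum>i<a. \<Sum>j<b. \<Sum>k<n. (A i j k)\<^sup>2)"
    by (simp add: sum_distrib_left)
  finally show ?thesis
    by (simp add: tfro_def sum_nonneg)
qed

lemma sum_lessThan_add: "(\<Sum>i<a + (b::nat). f i) = (\<Sum>i<a. f i) + (\<Sum>i<b. f (a + i))"
  by (induct b) (simp_all add: add_ac)

lemma tfro_cong:
  "(\<And>i j k. i < a \<Longrightarrow> j < b \<Longrightarrow> k < n \<Longrightarrow> A i j k = B i j k) \<Longrightarrow> tfro a b n A = tfro a b n B"
  by (simp add: tfro_def)

lemma tfro_blocks_sq:
  "(tfro (a + b) (c + d) n A)\<^sup>2 = (tfro a c n A)\<^sup>2 + (tfro a d n (\<lambda>i j. A i (c + j)))\<^sup>2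
     + (tfro b c n (\<lambda>i. A (a + i)))\<^sup>2 + (tfro b d n (\<lambda>i j. A (a + i) (c + j)))\<^sup>2"
  by (simp add: tfro_def sum_nonneg sum_lessThan_add sum.distrib)

lemma tprod_tstack_ttrans_tstack:
  "tprod n m (tstack a A B) (ttrans n (tstack a C D)) i j k =
    (if i < a then (if j < a then tprod n m A (ttrans n C) i j k else tprod n m A (ttrans n D) i (j - a) k)
     else (if j < a then tprod n m B (ttrans n C) (i - a) j k else tprod n m B (ttrans n D) (i - a) (j - a) k))"
  by (simp add: tprod_def ttrans_def tstack_def)

lemma tfro_diff_tprod_ttrans_sq:
  assumes "n > 0"
  shows "real n * (tfro a b n (\<lambda>i j k. tprod n r P (ttrans n Q) i j k - tprod n m P' (ttrans n Q') i j k))\<^sup>2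
    = frob_norm2 ({..<a} \<times> {..<n}) ({..<b} \<times> {..<n})
        (\<lambda>x y. mult_tr ({..<r} \<times> {..<n}) (bcirc n P) (bcirc n Q) x y
          - mult_tr ({..<m} \<times> {..<n}) (bcirc n P') (bcirc n Q') x y)"
  unfolding frob_norm2_bcirc[OF assms, symmetric]
  by (auto simp: frob_norm2_def frob_inner_def mult_tr_bcirc intro!: sum.cong) (simp add: bcirc_def)

lemma tfro_stack_balanced_le:
  assumes "n > 0"
    and LR: "teq r r n (tprod n a (ttrans n L) L) (tprod n b (ttrans n R) R)"
    and PQ: "teq m m n (tprod n a (ttrans n P) P) (tprod n b (ttrans n Q) Q)"
  shows "tfro (a + b) (a + b) n
           (\<lambda>i j k. tprod n r (tstack a L R) (ttrans n (tstack a L R)) i j k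
              - tprod n m (tstack a P Q) (ttrans n (tstack a P Q)) i j k)
         \<le> 2 * tfro a b n (\<lambda>i j k. tprod n r L (ttrans n R) i j k - tprod n m P (ttrans n Q) i j k)"
proof -
  define E where "E A B C D c d = frob_norm2 ({..<c} \<times> {..<n}) ({..<d} \<times> {..<n})
      (\<lambda>x y. mult_tr ({..<r} \<times> {..<n}) (bcirc n A) (bcirc n B) x y
        - mult_tr ({..<m} \<times> {..<n}) (bcirc n C) (bcirc n D) x y)" for A B C D c d
  define F where "F A B C D c d
      = tfro c d n (\<lambda>i j k. tprod n r A (ttrans n B) i j k - tprod n m C (ttrans n D) i j k)" for A B C D c d
  have block: "real n * (F A B C D c d)\<^sup>2 = E A B C D c d" for A B C D c d
    unfolding E_def F_def by (rule tfro_diff_tprod_ttrans_sq[OF assms(1)])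
  have key: "E L L P P a a + E R R Q Q b b \<le> 2 * E L R P Q a b"
    unfolding E_def
    by (rule balanced_factors_dist_le)
       (auto intro: tr_mult_bcirc_teq[OF assms(1) LR] tr_mult_bcirc_teq[OF assms(1) PQ])
  have transposed: "E R L Q P b a = E L R P Q a b"
    unfolding E_def frob_norm2_def frob_inner_def mult_tr_def by (subst sum.swap) (simp add: mult.commute)
  have "real n * (tfro (a + b) (a + b) n
           (\<lambda>i j k. tprod n r (tstack a L R) (ttrans n (tstack a L R)) i j k
              - tprod n m (tstack a P Q) (ttrans n (tstack a P Q)) i j k))\<^sup>2
      = real n * ((F L L P P a a)\<^sup>2 + (F L R P Q a b)\<^sup>2 + (F R L Q P b a)\<^sup>2 + (F R R Q Q b b)\<^sup>2)"
    unfolding tfro_blocks_sq F_def by (simp add: tprod_tstack_ttrans_tstack cong: tfro_cong)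
  also have "\<dots> = E L L P P a a + E L R P Q a b + E R L Q P b a + E R R Q Q b b"
    by (simp add: distrib_left block)
  also have "\<dots> \<le> 4 * E L R P Q a b"
    using key transposed by linarith
  also have "\<dots> = real n * (2 * F L R P Q a b)\<^sup>2"
    by (simp add: block[symmetric] power_mult_distrib)
  finally have "(tfro (a + b) (a + b) n
           (\<lambda>i j k. tprod n r (tstack a L R) (ttrans n (tstack a L R)) i j k
              - tprod n m (tstack a P Q) (ttrans n (tstack a P Q)) i j k))\<^sup>2 \<le> (2 * F L R P Q a b)\<^sup>2"
    using assms(1) by simp
  then show ?thesis
    unfolding F_def by (rule power2_le_imp_le) (simp add: tfro_def sum_nonneg)
qed

theorem lemma10:
  fixes n1 n2 n3 r rs :: nat and L R Xs U S V :: tensor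
  assumes "n3 > 0"
    and "teq r r n3 (tprod n3 n1 (ttrans n3 L) L) (tprod n3 n2 (ttrans n3 R) R)"
    and "teq n1 n2 n3 Xs (tprod n3 rs (tprod n3 rs U S) (ttrans n3 V))"
    and "teq rs rs n3 (tprod n3 n1 (ttrans n3 U) U) tid"
    and "teq rs rs n3 (tprod n3 n2 (ttrans n3 V) V) tid"
    and "fdiag_nonneg rs n3 S"
    and "tubal_rank n1 n2 n3 Xs = rs"
  shows "tfro (n1 + n2) (n1 + n2) n3
           (\<lambda>i j k. tprod n3 r (tstack n1 L R) (ttrans n3 (tstack n1 L R)) i j k
              - tprod n3 rs (tstack n1 (tprod n3 rs U (tsqrt n3 S)) (tprod n3 rs V (tsqrt n3 S)))
                   (ttrans n3 (tstack n1 (tprod n3 rs U (tsqrt n3 S)) (tprod n3 rs V (tsqrt n3 S)))) i j k)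
         \<le> 2 * tfro n1 n2 n3 (\<lambda>i j k. tprod n3 r L (ttrans n3 R) i j k - Xs i j k)"
proof -
  let ?T = "tsqrt n3 S"
  have "teq rs rs n3 (tprod n3 n1 (ttrans n3 U) U) (tprod n3 n2 (ttrans n3 V) V)"
    using assms(4,5) by (simp add: teq_def)
  then have balanced: "teq rs rs n3 (tprod n3 n1 (ttrans n3 (tprod n3 rs U ?T)) (tprod n3 rs U ?T))
      (tprod n3 n2 (ttrans n3 (tprod n3 rs V ?T)) (tprod n3 rs V ?T))"
    by (rule teq_gram_tprod_right[OF assms(1)])
  have "tfro n1 n2 n3 (\<lambda>i j k. tprod n3 r L (ttrans n3 R) i j k - Xs i j k)
      = tfro n1 n2 n3 (\<lambda>i j k. tprod n3 r L (ttrans n3 R) i j k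
          - tprod n3 rs (tprod n3 rs U ?T) (ttrans n3 (tprod n3 rs V ?T)) i j k)"
    using assms(3) by (intro tfro_cong) (simp add: teq_def tprod_tsqrt_factors[OF assms(1,6)])
  then show ?thesis
    using tfro_stack_balanced_le[OF assms(1,2) balanced] by simp
qed

end
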